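(* Assume $n>R$ and that the sample satisfies $N_r\ge2(k+1)$ for every $r\in[R]$. Then $$\sup_{f\in\mathcal F}\big|U_\Omega(f)-\bar U_\Omega(f)\big|\le\frac{2\mathcal BR}{n-R}+\frac{6\mathcal BRk}{N}+\frac{2\mathcal Bk}{N-k-1}.$$
   Context: Setup: Let $\mathcal X$ be a measurable space, $R\ge2$, $\rho=(\rho_1,\dots,\rho_R)$ a probability vector with all $\rho_r>0$, and $\mathcal D_1,\dots,\mathcal D_R$ distributions on $\mathcal X$; $\bar{\mathcal D}:=\sum_r\rho_r\mathcal D_r$. A labeled sample consists of $N$ i.i.d. pairs $(X_j,Y_j)$ with $\mathbb P(Y_j=r)=\rho_r$ and $X_j\mid Y_j=r\sim\mathcal D_r$; $S=(X_1,\dots,X_N)$, $N_r=|\{j:Y_j=r\}|$, $\widehat\rho_r=N_r/N$. Fix an integer $k\ge1$. $\mathcal F$ is a class of maps $f:\mathcal X\to\mathbb R^d$, $\phi:\mathbb R^k\to\mathbb R_+$, and $\ell_{\phi,f}(x,x^+,x_1^-,\dots,x_k^-):=\phi\big((f(x)^\top[f(x^+)-f(x_i^-)])_{i=1}^k\big)$, with $0\le\ell_{\phi,f}\le\mathcal B$ for all $f\in\mathcal F$. Natural estimator: $\Omega_r$ is the set of index tuples $(a,b,c_1,\dots,c_k)$ of pairwise distinct indices in $[N]$ with $Y_a=Y_b=r$ (negatives $c_i$ arbitrary); $U_{\Omega_r}(f)$ is the average of $\ell_{\phi,f}(X_a,X_b,X_{c_1},\dots,X_{c_k})$ over $\Omega_r$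 ($:=0$ if empty); $U_\Omega(f):=\sum_r\widehat\rho_rU_{\Omega_r}(f)$. Auxiliary estimator: $n:=2\lfloor N/(k+2)\rfloor$; $\Pi$ is the set of permutations of $[N]$; for $\pi\in\Pi$, $I_\pi=\{\pi(1),\dots,\pi(n)\}$, $n_r^\pi:=|\{j\in I_\pi:Y_j=r\}|$, $\Omega_r^\pi$ is the set of tuples $(a,b,c_1,\dots,c_k)$ of pairwise distinct indices with $a,b\in I_\pi$, $Y_a=Y_b=r$, $c_i\notin I_\pi$; $U_{\Omega_r^\pi}(f)$ is the corresponding average ($:=0$ if empty); $\omega_r^\pi:=\lfloor n_r^\pi/2\rfloor/\sum_q\lfloor n_q^\pi/2\rfloor$ ($:=0$ if denominator $0$); $\bar U_\Omega(f):=\frac1{N!}\sum_{\pi\in\Pi}\sum_r\omega_r^\pi U_{\Omega_r^\pi}(f)$. *)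

theory Defs
  imports "HOL-Analysis.Analysis"
begin

text \<open>Sample indices are 0..<N; labels Y j are in {1..R}. Index tuples
(a,b,c_1,...,c_k) are lists t of length k+2 with t!0 = a, t!1 = b and
drop 2 t = [c_1,...,c_k].\<close>

definition loss ::
  "(real list \<Rightarrow> real) \<Rightarrow> ('x \<Rightarrow> 'v::euclidean_space) \<Rightarrow> 'x \<Rightarrow> 'x \<Rightarrow> 'x list \<Rightarrow> real" where
  "loss \<phi> f x xp xneg = \<phi> (map (\<lambda>xm. f x \<bullet> (f xp - f xm)) xneg)"

definition avg_over :: "'a set \<Rightarrow> ('a \<Rightarrow> real) \<Rightarrow> real" where
  "avg_over A g = (if card A = 0 then 0 else (\<Sum>t\<in>A. g t) / real (card A))"

definition tuple_loss ::
  "(real list \<Rightarrow> real) \<Rightarrow> ('x \<Rightarrow> 'v::euclidean_space) \<Rightarrow> (nat \<Rightarrow> 'x) \<Rightarrow> nat list \<Rightarrow> real" where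
  "tuple_loss \<phi> f X t = loss \<phi> f (X (t!0)) (X (t!1)) (map X (drop 2 t))"

definition Omega_r :: "nat \<Rightarrow> nat \<Rightarrow> (nat \<Rightarrow> nat) \<Rightarrow> nat \<Rightarrow> nat list set" where
  "Omega_r N k Y r = {t. length t = k + 2 \<and> distinct t \<and> set t \<subseteq> {0..<N}
      \<and> Y (t!0) = r \<and> Y (t!1) = r}"

definition N_r :: "nat \<Rightarrow> (nat \<Rightarrow> nat) \<Rightarrow> nat \<Rightarrow> nat" where
  "N_r N Y r = card {j\<in>{0..<N}. Y j = r}"

definition U_Omega ::
  "nat \<Rightarrow> nat \<Rightarrow> nat \<Rightarrow> (nat \<Rightarrow> nat) \<Rightarrow> (nat \<Rightarrow> 'x) \<Rightarrow> (real list \<Rightarrow> real)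
     \<Rightarrow> ('x \<Rightarrow> 'v::euclidean_space) \<Rightarrow> real" where
  "U_Omega N R k Y X \<phi> f =
     (\<Sum>r\<in>{1..R}. (real (N_r N Y r) / real N) * avg_over (Omega_r N k Y r) (tuple_loss \<phi> f X))"

definition aux_n :: "nat \<Rightarrow> nat \<Rightarrow> nat" where
  "aux_n N k = 2 * (N div (k + 2))"

definition I_pi :: "nat \<Rightarrow> (nat \<Rightarrow> nat) \<Rightarrow> nat set" where
  "I_pi n \<pi> = \<pi> ` {0..<n}"

definition n_r_pi :: "nat \<Rightarrow> (nat \<Rightarrow> nat) \<Rightarrow> (nat \<Rightarrow> nat) \<Rightarrow> nat \<Rightarrow> nat" where
  "n_r_pi n Y \<pi> r = card {j\<in>I_pi n \<pi>. Y j = r}"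

definition Omega_r_pi ::
  "nat \<Rightarrow> nat \<Rightarrow> nat \<Rightarrow> (nat \<Rightarrow> nat) \<Rightarrow> (nat \<Rightarrow> nat) \<Rightarrow> nat \<Rightarrow> nat list set" where
  "Omega_r_pi N n k Y \<pi> r = {t. length t = k + 2 \<and> distinct t \<and> set t \<subseteq> {0..<N}
      \<and> t!0 \<in> I_pi n \<pi> \<and> t!1 \<in> I_pi n \<pi> \<and> Y (t!0) = r \<and> Y (t!1) = r
      \<and> (\<forall>c\<in>set (drop 2 t). c \<notin> I_pi n \<pi>)}"

definition omega_r_pi :: "nat \<Rightarrow> nat \<Rightarrow> (nat \<Rightarrow> nat) \<Rightarrow> (nat \<Rightarrow> nat) \<Rightarrow> nat \<Rightarrow> real" where
  "omega_r_pi R n Y \<pi> r =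
     (let D = (\<Sum>q\<in>{1..R}. n_r_pi n Y \<pi> q div 2) in
      if D = 0 then 0 else real (n_r_pi n Y \<pi> r div 2) / real D)"

definition U_bar ::
  "nat \<Rightarrow> nat \<Rightarrow> nat \<Rightarrow> (nat \<Rightarrow> nat) \<Rightarrow> (nat \<Rightarrow> 'x) \<Rightarrow> (real list \<Rightarrow> real)
     \<Rightarrow> ('x \<Rightarrow> 'v::euclidean_space) \<Rightarrow> real" where
  "U_bar N R k Y X \<phi> f =
     (let n = aux_n N k in
      (1 / fact N) * (\<Sum>\<pi>\<in>{\<pi>. \<pi> permutes {0..<N}}.
         \<Sum>r\<in>{1..R}. omega_r_pi R n Y \<pi> r *
            avg_over (Omega_r_pi N n k Y \<pi> r) (tuple_loss \<phi> f X)))"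

end

theory Submission
  imports Defs "HOL-Combinatorics.Permutations"
begin

(* Both estimators are weighted sums of the same losses over the tuples t of \<Omega>_r. In U_\<Omega> the
  tuple t gets the weight u_r = (N_r/N)/|\<Omega>_r|; averaging over permutations turns U_bar into an
  average over uniformly random n-subsets I, in which t gets a weight W_r(t). The weights u sum
  to 1 and the W to at most 1, so for losses in [0,B] the difference of the estimators is at most
  B times the total positive part of u - W. To bound W_r(t) from below, count the subsets I for
  which t is admissible (those containing its positive pair and avoiding its negatives) and apply
  Cauchy-Schwarz to the class counts n_r(I) over these subsets. This gives
  u_r - W_r(t) \<le> (2/(n-R) + N_r(k+1)/((N-k-2)N)) / |\<Omega>_r|, which sums to the stated bound. *)

lemma avg_over_eq: "finite A \<Longrightarrow> avg_over A g = (\<Sum>x\<in>A. g x) / real (card A)"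
  unfolding avg_over_def by auto

lemma avg_over_cmult: "avg_over A (\<lambda>x. c * g x) = c * avg_over A g"
  unfolding avg_over_def by (simp add: sum_distrib_left)

lemma avg_over_sum: "avg_over A (\<lambda>x. \<Sum>i\<in>S. g i x) = (\<Sum>i\<in>S. avg_over A (g i))"
  unfolding avg_over_def by (auto simp: sum.swap[of _ S] sum_divide_distrib)

lemma avg_over_le:
  assumes "\<And>x. x \<in> A \<Longrightarrow> g x \<le> c" "0 \<le> c"
  shows "avg_over A g \<le> c"
proof (cases "card A = 0")
  case False
  then have "finite A" by (meson card.infinite)
  have "(\<Sum>x\<in>A. g x) \<le> real (card A) * c" using sum_bounded_above[of A g c] assms by simp
  then show ?thesis using False by (simp add: avg_over_def field_simps)
qed (simp add: avg_over_def assms)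

lemma abs_sum_mult_le:
  fixes h a d :: "'a \<Rightarrow> real"
  assumes "0 \<le> sum a S" "\<And>s. s \<in> S \<Longrightarrow> 0 \<le> h s \<and> h s \<le> B"
    and "\<And>s. s \<in> S \<Longrightarrow> a s \<le> d s" "\<And>s. s \<in> S \<Longrightarrow> 0 \<le> d s"
  shows "\<bar>\<Sum>s\<in>S. h s * a s\<bar> \<le> B * sum d S"
proof -
  have bound: "g s * a s \<le> B * d s" if "s \<in> S" "0 \<le> g s" "g s \<le> B" for g s
  proof (cases "0 \<le> a s")
    case True
    then have "g s * a s \<le> B * a s" using that by (intro mult_right_mono)
    also have "\<dots> \<le> B * d s" using assms(3) that by (intro mult_left_mono) auto
    finally show ?thesis .
  next
    case False
    then have "g s * a s \<le> 0" using that by (simp add: mult_nonneg_nonpos)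
    also have "0 \<le> B * d s" using assms(4) that by simp
    finally show ?thesis .
  qed
  have "(\<Sum>s\<in>S. h s * a s) \<le> B * sum d S"
    unfolding sum_distrib_left using bound[of _ h] assms(2) by (intro sum_mono) blast
  moreover have "(\<Sum>s\<in>S. (B - h s) * a s) \<le> B * sum d S"
    unfolding sum_distrib_left using bound[of _ "\<lambda>s. B - h s"] assms(2) by (intro sum_mono) force
  moreover have "(\<Sum>s\<in>S. (B - h s) * a s) = B * sum a S - (\<Sum>s\<in>S. h s * a s)"
    by (simp add: left_diff_distrib sum_subtractf sum_distrib_left)
  moreover have "0 \<le> B * sum a S"
  proof (cases "S = {}")
    case False
    then obtain s where "s \<in> S" by blast
    then have "0 \<le> B" using assms(2)[of s] by linarith
    then show ?thesis using assms(1) by simp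
  qed simp
  ultimately show ?thesis by linarith
qed

section \<open>Random subsets from random permutations\<close>

lemma permutes_exists_image:
  assumes "finite U" "I \<subseteq> U" "J \<subseteq> U" "card I = card J"
  obtains \<sigma> where "\<sigma> permutes U" "\<sigma> ` I = J"
proof -
  have fin: "finite I" "finite J" using assms finite_subset by blast+
  obtain f where f: "bij_betw f I J" using finite_same_card_bij[OF fin assms(4)] by blast
  have "card (U - I) = card (U - J)" using assms fin by (simp add: card_Diff_subset)
  then obtain g where g: "bij_betw g (U - I) (U - J)"
    using finite_same_card_bij[of "U - I" "U - J"] assms(1) by auto
  define \<sigma> where "\<sigma> x = (if x \<in> I then f x else if x \<in> U then g x else x)" for x
  have "bij_betw \<sigma> I J" using f by (rule bij_betw_cong[THEN iffD1, rotated]) (simp add: \<sigma>_def)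
  moreover have "bij_betw \<sigma> (U - I) (U - J)"
    using g by (rule bij_betw_cong[THEN iffD1, rotated]) (simp add: \<sigma>_def)
  ultimately have "bij_betw \<sigma> (I \<union> (U - I)) (J \<union> (U - J))" by (rule bij_betw_combine) blast
  with assms have "bij_betw \<sigma> U U" by (simp add: Un_absorb1)
  then have "\<sigma> permutes U" by (rule bij_imp_permutes) (use assms(2) in \<open>force simp: \<sigma>_def\<close>)
  with \<open>bij_betw \<sigma> I J\<close> show thesis using that bij_betw_imp_surj_on by blast
qed

lemma card_permutes_image_le:
  assumes "finite U" "I \<subseteq> U" "I' \<subseteq> U" "card I = card I'"
  shows "card {\<pi>. \<pi> permutes U \<and> \<pi> ` J = I} \<le> card {\<pi>. \<pi> permutes U \<and> \<pi> ` J = I'}"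
proof -
  obtain \<sigma> where \<sigma>: "\<sigma> permutes U" "\<sigma> ` I = I'" by (rule permutes_exists_image[OF assms])
  have "inj ((\<circ>) \<sigma>)" using permutes_inj[OF \<sigma>(1)] by (simp add: fun.inj_map)
  then have "inj_on ((\<circ>) \<sigma>) {\<pi>. \<pi> permutes U \<and> \<pi> ` J = I}" by (rule inj_on_subset) simp
  moreover have "\<sigma> \<circ> \<pi> \<in> {\<pi>. \<pi> permutes U \<and> \<pi> ` J = I'}" if "\<pi> permutes U" "\<pi> ` J = I" for \<pi>
    using that \<sigma> by (simp add: permutes_compose flip: image_image)
  then have "(\<circ>) \<sigma> ` {\<pi>. \<pi> permutes U \<and> \<pi> ` J = I} \<subseteq> {\<pi>. \<pi> permutes U \<and> \<pi> ` J = I'}" by blast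
  moreover have "finite {\<pi>. \<pi> permutes U \<and> \<pi> ` J = I'}"
    using finite_permutations[OF assms(1)] by (rule rev_finite_subset) blast
  ultimately show ?thesis by (rule card_inj_on_le)
qed

(* All fibres of \<pi> \<mapsto> \<pi> ` J over the subsets of size card J have the same size. *)
lemma avg_over_permutes_image:
  assumes "finite U" "J \<subseteq> U"
  shows "avg_over {\<pi>. \<pi> permutes U} (\<lambda>\<pi>. G (\<pi> ` J)) = avg_over {I. I \<subseteq> U \<and> card I = card J} G"
proof -
  let ?P = "{\<pi>. \<pi> permutes U}"
  let ?S = "{I. I \<subseteq> U \<and> card I = card J}"
  define c where "c I = card {\<pi>. \<pi> permutes U \<and> \<pi> ` J = I}" for I
  have finP: "finite ?P" using finite_permutations[OF assms(1)] .
  have finS: "finite ?S" by (rule finite_subset[of _ "Pow U"]) (use assms in auto)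
  have "\<pi> ` J \<in> ?S" if \<pi>: "\<pi> permutes U" for \<pi>
    using assms(2) permutes_image[OF \<pi>] card_image[OF inj_on_subset[OF permutes_inj[OF \<pi>]]]
    by blast
  then have image_in: "(\<lambda>\<pi>. \<pi> ` J) ` ?P \<subseteq> ?S" by blast
  have c_const: "c I = c J" if "I \<in> ?S" for I
    using card_permutes_image_le[of U I J J] card_permutes_image_le[of U J I J] that assms
    unfolding c_def by simp
  have sum_eq: "(\<Sum>\<pi>\<in>?P. H (\<pi> ` J)) = real (c J) * (\<Sum>I\<in>?S. H I)" for H :: "'a set \<Rightarrow> real"
  proof -
    have "(\<Sum>\<pi>\<in>?P. H (\<pi> ` J)) = (\<Sum>I\<in>?S. \<Sum>\<pi>\<in>{\<pi>\<in>?P. \<pi> ` J = I}. H (\<pi> ` J))"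
      by (rule sum.group[OF finP finS image_in, symmetric])
    also have "\<dots> = (\<Sum>I\<in>?S. real (c I) * H I)"
    proof (rule sum.cong[OF refl])
      fix I
      have "(\<Sum>\<pi>\<in>{\<pi>\<in>?P. \<pi> ` J = I}. H (\<pi> ` J)) = (\<Sum>\<pi>\<in>{\<pi>\<in>?P. \<pi> ` J = I}. H I)"
        by (rule sum.cong) simp_all
      then show "(\<Sum>\<pi>\<in>{\<pi>\<in>?P. \<pi> ` J = I}. H (\<pi> ` J)) = real (c I) * H I"
        by (simp add: c_def)
    qed
    also have "\<dots> = (\<Sum>I\<in>?S. real (c J) * H I)" by (rule sum.cong) (simp_all add: c_const)
    finally show ?thesis by (simp add: sum_distrib_left)
  qed
  have card_P: "real (card ?P) = real (c J) * real (card ?S)" using sum_eq[of "\<lambda>_. 1"] by simp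
  have "id \<in> ?P" by (simp add: permutes_id)
  then have P_ne: "card ?P \<noteq> 0" using finP by (metis card_0_eq empty_iff)
  have "c J \<noteq> 0"
  proof
    assume "c J = 0"
    then have "real (card ?P) = 0" using card_P by simp
    with P_ne show False by simp
  qed
  have "avg_over ?P (\<lambda>\<pi>. G (\<pi> ` J)) = (\<Sum>\<pi>\<in>?P. G (\<pi> ` J)) / real (card ?P)"
    using P_ne by (simp add: avg_over_def)
  also have "\<dots> = (\<Sum>I\<in>?S. G I) / real (card ?S)"
    unfolding card_P sum_eq[of G] using \<open>c J \<noteq> 0\<close> by simp
  finally show ?thesis by (simp add: avg_over_def)
qed

lemma card_subsets_containing_avoiding:
  assumes "finite U" "S \<subseteq> U" "T \<subseteq> U" "S \<inter> T = {}" "card S \<le> n"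
  shows "card {I. I \<subseteq> U \<and> card I = n \<and> S \<subseteq> I \<and> I \<inter> T = {}}
       = (card U - card S - card T) choose (n - card S)"
proof -
  have fin: "finite S" "finite T" using assms finite_subset by blast+
  have "bij_betw (\<lambda>I. I - S) {I. I \<subseteq> U \<and> card I = n \<and> S \<subseteq> I \<and> I \<inter> T = {}}
          {J. J \<subseteq> U - S - T \<and> card J = n - card S}"
  proof (rule bij_betw_byWitness[where f' = "\<lambda>J. J \<union> S"])
    show "(\<lambda>I. I - S) ` {I. I \<subseteq> U \<and> card I = n \<and> S \<subseteq> I \<and> I \<inter> T = {}}
          \<subseteq> {J. J \<subseteq> U - S - T \<and> card J = n - card S}"
    proof -
      have "card (I - S) = n - card S" if "I \<subseteq> U" "card I = n" "S \<subseteq> I" for I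
        using that fin by (simp add: card_Diff_subset)
      then show ?thesis by auto
    qed
    show "(\<lambda>J. J \<union> S) ` {J. J \<subseteq> U - S - T \<and> card J = n - card S}
          \<subseteq> {I. I \<subseteq> U \<and> card I = n \<and> S \<subseteq> I \<and> I \<inter> T = {}}"
    proof -
      have "card (J \<union> S) = n" if "J \<subseteq> U - S - T" "card J = n - card S" for J
      proof -
        have "finite J" "J \<inter> S = {}" using that assms(1) finite_subset[of J U] by auto
        then show ?thesis using that assms(5) fin by (simp add: card_Un_disjoint)
      qed
      then show ?thesis using assms(2,4) by blast
    qed
  qed auto
  then have "card {I. I \<subseteq> U \<and> card I = n \<and> S \<subseteq> I \<and> I \<inter> T = {}}
      = card (U - S - T) choose (n - card S)"
    using n_subsets[of "U - S - T"] assms(1) by (simp add: bij_betw_same_card)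
  also have "card (U - S - T) = card U - card S - card T"
  proof -
    have "card (U - S - T) = card (U - (S \<union> T))" by (simp add: Diff_eq Int_assoc)
    also have "\<dots> = card U - card (S \<union> T)" using assms fin by (simp add: card_Diff_subset)
    also have "card (S \<union> T) = card S + card T" using fin assms(4) by (simp add: card_Un_disjoint)
    finally show ?thesis by simp
  qed
  finally show ?thesis .
qed

lemma sum_card_Int_subsets_le:
  assumes "finite U" "C \<subseteq> U" "S \<subseteq> U" "a \<in> C" "b \<in> C" "a \<noteq> b" "a \<notin> S" "b \<notin> S" "3 \<le> n"
  shows "(\<Sum>I\<in>{I. I \<subseteq> U \<and> card I = n \<and> {a, b} \<subseteq> I \<and> I \<inter> S = {}}. card (I \<inter> C))
     \<le> 2 * ((card U - 2 - card S) choose (n - 2))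
        + (card C - 2) * ((card U - 3 - card S) choose (n - 3))"
proof -
  define T where "T = {I. I \<subseteq> U \<and> card I = n \<and> {a, b} \<subseteq> I \<and> I \<inter> S = {}}"
  define g where "g j = card {I\<in>T. j \<in> I}" for j
  have finT: "finite T" unfolding T_def by (rule finite_subset[of _ "Pow U"]) (use assms(1) in auto)
  have finC: "finite C" using assms(1,2) finite_subset by blast
  have g_ab: "g j = (card U - 2 - card S) choose (n - 2)" if "j \<in> {a, b}" for j
  proof -
    have "{I\<in>T. j \<in> I} = T" using that unfolding T_def by blast
    then have "g j = card T" unfolding g_def by simp
    also have "\<dots> = (card U - card {a, b} - card S) choose (n - card {a, b})"
      unfolding T_def by (rule card_subsets_containing_avoiding) (use assms in auto)
    finally show ?thesis using assms(6) by (simp add: numeral_2_eq_2)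
  qed
  have g_other: "g j \<le> (card U - 3 - card S) choose (n - 3)" if j: "j \<in> C - {a, b}" for j
  proof (cases "j \<in> S")
    case True
    then have "{I\<in>T. j \<in> I} = {}" unfolding T_def by blast
    then show ?thesis unfolding g_def by (simp only: card.empty le0)
  next
    case False
    have "g j = card {I. I \<subseteq> U \<and> card I = n \<and> {a, b, j} \<subseteq> I \<and> I \<inter> S = {}}"
      unfolding g_def T_def by (rule arg_cong[of _ _ card]) blast
    also have "\<dots> = (card U - card {a, b, j} - card S) choose (n - card {a, b, j})"
      by (rule card_subsets_containing_avoiding) (use assms j False in auto)
    also have "card {a, b, j} = 3" using assms(6) j by (auto simp: card_insert_if)
    finally show ?thesis by simp
  qed
  have "(\<Sum>I\<in>T. card (I \<inter> C)) = (\<Sum>I\<in>T. \<Sum>j\<in>{j\<in>C. j \<in> I}. 1)"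
    by (intro sum.cong) (simp_all add: Int_def conj_commute)
  also have "\<dots> = (\<Sum>j\<in>C. g j)"
    unfolding sum.swap_restrict[OF finT finC] g_def by simp
  also have "\<dots> = (\<Sum>j\<in>C - {a, b}. g j) + (\<Sum>j\<in>{a, b}. g j)"
    by (rule sum.subset_diff) (use finC assms(4,5) in auto)
  also have "\<dots> \<le> card (C - {a, b}) * ((card U - 3 - card S) choose (n - 3))
                  + 2 * ((card U - 2 - card S) choose (n - 2))"
    using sum_bounded_above[of "C - {a, b}" g, OF g_other] g_ab assms(6) by simp
  also have "card (C - {a, b}) = card C - 2"
    using finC assms(4-6) by (simp add: card_Diff_subset)
  finally show ?thesis unfolding T_def by linarith
qed

lemma card_distinct_pairs:
  assumes "finite A" "2 \<le> card A"
  shows "card {p. length p = 2 \<and> distinct p \<and> set p \<subseteq> A} = card A * (card A - 1)"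
proof -
  have "{card A - 2 + 1..card A} = {card A - 1, card A}" using assms(2) by auto
  then show ?thesis
    using card_lists_distinct_length_eq[OF assms(1)] assms(2) by (simp add: mult.commute)
qed

lemma sum_card_label_classes:
  assumes "finite I" "\<And>j. j \<in> I \<Longrightarrow> Y j \<in> Q" "finite Q"
  shows "(\<Sum>q\<in>Q. card {j\<in>I. Y j = q}) = card I"
proof -
  have "(\<Sum>q\<in>Q. card {j\<in>I. Y j = q}) = card (\<Union>q\<in>Q. {j\<in>I. Y j = q})"
    by (rule card_UN_disjoint[symmetric]) (use assms in auto)
  also have "(\<Union>q\<in>Q. {j\<in>I. Y j = q}) = I" using assms(2) by blast
  finally show ?thesis .
qed

lemma length_Suc_Suc_cases:
  assumes "length t = k + 2"
  obtains a b cs where "t = a # b # cs" "length cs = k"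
  using assms by (cases t; cases "tl t") auto

lemma finite_distinct_lists: "finite A \<Longrightarrow> finite {xs. length xs = k \<and> distinct xs \<and> set xs \<subseteq> A}"
  by (rule finite_subset[OF _ finite_lists_length_eq[of A k]]) auto

lemma card_div_le_sum_inverse:
  fixes m :: "'a \<Rightarrow> real"
  assumes "0 < card T" "\<And>i. i \<in> T \<Longrightarrow> 0 < m i" "(\<Sum>i\<in>T. m i) \<le> real (card T) * E"
  shows "real (card T) / E \<le> (\<Sum>i\<in>T. 1 / m i)"
proof -
  have "finite T" "T \<noteq> {}" using assms(1) card_gt_0_iff by blast+
  then have "0 < (\<Sum>i\<in>T. m i)" using assms(2) by (rule sum_pos)
  then have "0 < real (card T) * E" using assms(3) by linarith
  then have "0 < E" using assms(1) by (simp add: zero_less_mult_iff)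
  have "(\<Sum>i\<in>T. sqrt (m i) * (1 / sqrt (m i)))\<^sup>2
        \<le> (\<Sum>i\<in>T. (sqrt (m i))\<^sup>2) * (\<Sum>i\<in>T. (1 / sqrt (m i))\<^sup>2)"
    by (rule Cauchy_Schwarz_ineq_sum)
  also have "(\<Sum>i\<in>T. sqrt (m i) * (1 / sqrt (m i))) = (\<Sum>i\<in>T. 1)"
    using assms(2) by (intro sum.cong) (simp_all add: less_imp_neq[symmetric])
  also have "(\<Sum>i\<in>T. (sqrt (m i))\<^sup>2) = (\<Sum>i\<in>T. m i)"
    using assms(2) by (intro sum.cong) (auto simp: less_imp_le)
  also have "(\<Sum>i\<in>T. (1 / sqrt (m i))\<^sup>2) = (\<Sum>i\<in>T. 1 / m i)"
    using assms(2) by (intro sum.cong) (auto simp: power_divide less_imp_le)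
  also have "(\<Sum>i\<in>T. m i) * (\<Sum>i\<in>T. 1 / m i) \<le> real (card T) * E * (\<Sum>i\<in>T. 1 / m i)"
    using assms(2,3) by (intro mult_right_mono sum_nonneg) (auto simp: less_imp_le)
  finally have "real (card T) * real (card T) \<le> real (card T) * (E * (\<Sum>i\<in>T. 1 / m i))"
    by (simp add: power2_eq_square mult.assoc)
  then show ?thesis using assms(1) \<open>0 < E\<close> by (simp add: divide_le_eq mult.commute)
qed

lemma real_prod_falling:
  assumes "k \<le> c"
  shows "real (\<Prod>{c - k + 1..c}) = fact c / fact (c - k)"
proof -
  have "fact c = (fact (c - k) :: nat) * \<Prod>{Suc (c - k)..c}"
    by (rule fact_eq_fact_times) simp
  then have "(fact c :: real) = fact (c - k) * real (\<Prod>{c - k + 1..c})"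
    by (metis Suc_eq_plus1 of_nat_fact of_nat_mult)
  then show ?thesis by (simp add: field_simps)
qed

lemma choose_div_falling_eq:
  assumes "2 \<le> n" "n + k \<le> N"
  shows "real ((N - 2 - k) choose (n - 2))
         / (real (N choose n) * real n * real (\<Prod>{N - n - k + 1..N - n}))
       = (real n - 1) / (real N * (real N - 1) * real (\<Prod>{N - 2 - k + 1..N - 2}))"
proof -
  obtain n' N' where n: "n = n' + 2" and N: "N = N' + 2"
    using assms by (metis add.commute le_Suc_ex le_add2 order_trans)
  have le: "n' \<le> N' - k" "k \<le> N' - n'" "k \<le> N'" "n' + 2 \<le> N' + 2" using assms n N by auto
  have fact_n: "(fact (n' + 2) :: real) = (real n' + 2) * (real n' + 1) * fact n'"
    and fact_N: "(fact (N' + 2) :: real) = (real N' + 2) * (real N' + 1) * fact N'"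
    by (simp_all add: fact_Suc numeral_2_eq_2 algebra_simps)
  have "real ((N' - k) choose n') = fact (N' - k) / (fact n' * fact (N' - k - n'))"
    by (rule binomial_fact[OF le(1)])
  then have e1: "real ((N - 2 - k) choose (n - 2)) = fact (N' - k) / (fact n' * fact (N' - n' - k))"
    unfolding n N by (simp add: diff_diff_left add.commute)
  have "real ((N' + 2) choose (n' + 2)) = fact (N' + 2) / (fact (n' + 2) * fact (N' + 2 - (n' + 2)))"
    by (rule binomial_fact[OF le(4)])
  then have e2: "real (N choose n)
      = (real N' + 2) * (real N' + 1) * fact N' / ((real n' + 2) * (real n' + 1) * fact n' * fact (N' - n'))"
    unfolding n N by (simp only: fact_n fact_N add_diff_cancel_right)
  have e3: "real (\<Prod>{N - n - k + 1..N - n}) = fact (N' - n') / fact (N' - n' - k)"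
    using real_prod_falling[OF le(2)] unfolding n N by simp
  have e4: "real (\<Prod>{N - 2 - k + 1..N - 2}) = fact N' / fact (N' - k)"
    using real_prod_falling[OF le(3)] unfolding N by simp
  have alg: "(d / (a * e)) / (x2 * x1 * b / (p2 * p1 * a * c) * p2 * (c / e)) = p1 / (x2 * x1 * (b / d))"
    if "a \<noteq> 0" "b \<noteq> 0" "c \<noteq> 0" "d \<noteq> 0" "e \<noteq> 0" "p1 \<noteq> 0" "p2 \<noteq> 0" "x1 \<noteq> 0" "x2 \<noteq> 0"
    for a b c d e p1 p2 x1 x2 :: real
    using that by (simp add: field_simps)
  have "real n = real n' + 2" "real n - 1 = real n' + 1"
    and "real N = real N' + 2" "real N - 1 = real N' + 1"
    using n N by simp_all
  then show ?thesis unfolding e1 e2 e3 e4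
    by (simp only:) (rule alg; simp; linarith)
qed

lemma finite_Omega_r: "finite (Omega_r N k Y r)"
  unfolding Omega_r_def
  by (rule finite_subset[OF _ finite_lists_length_eq[of "{0..<N}" "k + 2"]]) auto

lemma card_Omega_r:
  assumes "k + 2 \<le> N" "2 \<le> N_r N Y r"
  shows "card (Omega_r N k Y r) = N_r N Y r * (N_r N Y r - 1) * \<Prod>{N - 2 - k + 1..N - 2}"
proof -
  let ?C = "{j\<in>{0..<N}. Y j = r}"
  let ?P = "{p. length p = 2 \<and> distinct p \<and> set p \<subseteq> ?C}"
  let ?D = "\<lambda>p. {cs. length cs = k \<and> distinct cs \<and> set cs \<subseteq> {0..<N} - set p}"
  let ?S = "SIGMA p:?P. ?D p"
  have finP: "finite ?P" by (rule finite_distinct_lists) simp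
  have card_D: "card (?D p) = \<Prod>{N - 2 - k + 1..N - 2}" if "p \<in> ?P" for p
  proof -
    have "card ({0..<N} - set p) = N - 2"
      using that distinct_card[of p] by (simp add: card_Diff_subset subset_iff)
    then show ?thesis using card_lists_distinct_length_eq[of "{0..<N} - set p" k] assms(1) by simp
  qed
  have "inj_on (\<lambda>(p, cs). p @ cs) ?S"
  proof (rule inj_onI)
    fix x y assume xy: "x \<in> ?S" "y \<in> ?S" "(\<lambda>(p, cs). p @ cs) x = (\<lambda>(p, cs). p @ cs) y"
    obtain p cs p' cs' where "x = (p, cs)" "y = (p', cs')" by (cases x, cases y)
    with xy show "x = y" using append_eq_append_conv[of p p' cs cs'] by simp
  qed
  moreover have "(\<lambda>(p, cs). p @ cs) ` ?S = Omega_r N k Y r"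
  proof
    show "(\<lambda>(p, cs). p @ cs) ` ?S \<subseteq> Omega_r N k Y r"
    proof (rule image_subsetI)
      fix x assume "x \<in> ?S"
      then obtain p cs where pc: "x = (p, cs)" "p \<in> ?P" "cs \<in> ?D p" by blast
      then have "length p = 0 + 2" by simp
      then obtain a b where "p = [a, b]" by (rule length_Suc_Suc_cases) simp
      with pc show "(\<lambda>(p, cs). p @ cs) x \<in> Omega_r N k Y r" unfolding Omega_r_def by auto
    qed
    show "Omega_r N k Y r \<subseteq> (\<lambda>(p, cs). p @ cs) ` ?S"
    proof
      fix t assume t: "t \<in> Omega_r N k Y r"
      then have "length t = k + 2" unfolding Omega_r_def by blast
      then obtain a b cs where t_eq: "t = a # b # cs" "length cs = k" by (rule length_Suc_Suc_cases)
      have "([a, b], cs) \<in> ?S" using t t_eq unfolding Omega_r_def by auto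
      moreover have "t = (\<lambda>(p, cs). p @ cs) ([a, b], cs)" using t_eq by simp
      ultimately show "t \<in> (\<lambda>(p, cs). p @ cs) ` ?S" by (rule rev_image_eqI)
    qed
  qed
  ultimately have "card (Omega_r N k Y r) = card ?S" using card_image by fastforce
  also have "\<dots> = (\<Sum>p\<in>?P. card (?D p))"
    by (rule card_SigmaI) (use finP in \<open>auto intro!: finite_distinct_lists\<close>)
  also have "\<dots> = card ?P * \<Prod>{N - 2 - k + 1..N - 2}" by (simp add: card_D)
  also have "card ?P = N_r N Y r * (N_r N Y r - 1)"
    using card_distinct_pairs[of ?C] assms(2) unfolding N_r_def by simp
  finally show ?thesis .
qed

lemma card_Omega_r_pos:
  assumes "k + 2 \<le> N" "2 \<le> N_r N Y r"
  shows "0 < card (Omega_r N k Y r)"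
  using card_Omega_r[OF assms] assms(2) by (simp add: prod_pos)

definition n_r_set :: "(nat \<Rightarrow> nat) \<Rightarrow> nat set \<Rightarrow> nat \<Rightarrow> nat" where
  "n_r_set Y I r = card {j\<in>I. Y j = r}"

definition omega_r_set :: "nat \<Rightarrow> (nat \<Rightarrow> nat) \<Rightarrow> nat set \<Rightarrow> nat \<Rightarrow> real" where
  "omega_r_set R Y I r =
     (let D = (\<Sum>q\<in>{1..R}. n_r_set Y I q div 2) in
      if D = 0 then 0 else real (n_r_set Y I r div 2) / real D)"

definition Omega_r_set :: "nat \<Rightarrow> nat \<Rightarrow> (nat \<Rightarrow> nat) \<Rightarrow> nat set \<Rightarrow> nat \<Rightarrow> nat list set" where
  "Omega_r_set N k Y I r = {t. length t = k + 2 \<and> distinct t \<and> set t \<subseteq> {0..<N}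
      \<and> t!0 \<in> I \<and> t!1 \<in> I \<and> Y (t!0) = r \<and> Y (t!1) = r
      \<and> (\<forall>c\<in>set (drop 2 t). c \<notin> I)}"

lemma omega_r_pi_eq: "omega_r_pi R n Y \<pi> = omega_r_set R Y (I_pi n \<pi>)"
  unfolding omega_r_pi_def omega_r_set_def n_r_pi_def n_r_set_def ..

lemma Omega_r_pi_eq: "Omega_r_pi N n k Y \<pi> = Omega_r_set N k Y (I_pi n \<pi>)"
  unfolding Omega_r_pi_def Omega_r_set_def ..

lemma N_r_eq_n_r_set: "N_r N Y r = n_r_set Y {0..<N} r"
  unfolding N_r_def n_r_set_def ..

lemma two_le_n_r_set:
  assumes "finite I" "a \<in> I" "b \<in> I" "a \<noteq> b" "Y a = r" "Y b = r"
  shows "2 \<le> n_r_set Y I r"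
proof -
  have "card {a, b} \<le> card {j\<in>I. Y j = r}" by (rule card_mono) (use assms in auto)
  then show ?thesis using assms(4) unfolding n_r_set_def by simp
qed

lemma Omega_r_set_subset: "Omega_r_set N k Y I r \<subseteq> Omega_r N k Y r"
  unfolding Omega_r_set_def Omega_r_def by blast

lemma finite_Omega_r_set: "finite (Omega_r_set N k Y I r)"
  using finite_Omega_r Omega_r_set_subset by (rule finite_subset[rotated])

lemma omega_r_set_nonneg: "0 \<le> omega_r_set R Y I r"
  unfolding omega_r_set_def Let_def by (simp del: of_nat_sum)

lemma sum_omega_r_set_le_1: "(\<Sum>r\<in>{1..R}. omega_r_set R Y I r) \<le> 1"
proof -
  define D where "D = (\<Sum>q\<in>{1..R}. n_r_set Y I q div 2)"
  show ?thesis
  proof (cases "D = 0")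
    case True
    then show ?thesis unfolding omega_r_set_def D_def[symmetric] Let_def by simp
  next
    case False
    have "(\<Sum>r\<in>{1..R}. omega_r_set R Y I r) = (\<Sum>r\<in>{1..R}. real (n_r_set Y I r div 2)) / real D"
      unfolding omega_r_set_def D_def[symmetric] Let_def using False by (simp add: sum_divide_distrib)
    also have "(\<Sum>r\<in>{1..R}. real (n_r_set Y I r div 2)) = real D" unfolding D_def by simp
    also have "\<dots> / real D = 1" using False by simp
    finally show ?thesis by simp
  qed
qed

lemma card_Omega_r_set_le:
  assumes "I \<subseteq> {0..<N}" "card I = n" "k \<le> N - n" "2 \<le> n_r_set Y I r"
  shows "card (Omega_r_set N k Y I r) \<le> n_r_set Y I r * (n_r_set Y I r - 1) * \<Prod>{N - n - k + 1..N - n}"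
proof -
  let ?P = "{p. length p = 2 \<and> distinct p \<and> set p \<subseteq> {j\<in>I. Y j = r}}"
  let ?D = "{cs. length cs = k \<and> distinct cs \<and> set cs \<subseteq> {0..<N} - I}"
  have finI: "finite I" using assms(1) finite_subset by blast
  have "Omega_r_set N k Y I r \<subseteq> (\<lambda>(p, cs). p @ cs) ` (?P \<times> ?D)"
  proof
    fix t assume t: "t \<in> Omega_r_set N k Y I r"
    then have "length t = k + 2" unfolding Omega_r_set_def by blast
    then obtain a b cs where t_eq: "t = a # b # cs" "length cs = k" by (rule length_Suc_Suc_cases)
    have "([a, b], cs) \<in> ?P \<times> ?D" using t t_eq unfolding Omega_r_set_def by auto
    moreover have "t = (\<lambda>(p, cs). p @ cs) ([a, b], cs)" using t_eq by simp
    ultimately show "t \<in> (\<lambda>(p, cs). p @ cs) ` (?P \<times> ?D)" by (rule rev_image_eqI)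
  qed
  moreover have fin: "finite (?P \<times> ?D)"
    by (intro finite_cartesian_product finite_distinct_lists) (use finI in auto)
  ultimately have "card (Omega_r_set N k Y I r) \<le> card (?P \<times> ?D)"
    using card_image_le card_mono finite_imageI le_trans by meson
  also have "\<dots> = card ?P * card ?D" by (rule card_cartesian_product)
  also have "card ?P = n_r_set Y I r * (n_r_set Y I r - 1)"
    using card_distinct_pairs[of "{j\<in>I. Y j = r}"] finI assms(4) unfolding n_r_set_def by simp
  also have "card ({0..<N} - I) = N - n" using assms finI by (simp add: card_Diff_subset)
  then have "card ?D = \<Prod>{N - n - k + 1..N - n}"
    using card_lists_distinct_length_eq[of "{0..<N} - I" k] assms(3) by simp
  finally show ?thesis .
qed

lemma omega_r_set_ge:
  assumes "I \<subseteq> {0..<N}" "card I = n" "\<forall>j<N. Y j \<in> {1..R}" "r \<in> {1..R}"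
    and "2 \<le> n_r_set Y I r"
  shows "(real (n_r_set Y I r) - 1) / real n \<le> omega_r_set R Y I r"
proof -
  define m where "m = n_r_set Y I r"
  define D where "D = (\<Sum>q\<in>{1..R}. n_r_set Y I q div 2)"
  have "m div 2 \<le> D" unfolding D_def m_def
    by (rule member_le_sum[where f = "\<lambda>q. n_r_set Y I q div 2"]) (use assms(4) in auto)
  then have D_pos: "1 \<le> D" using assms(5) unfolding m_def by linarith
  have "2 * D \<le> (\<Sum>q\<in>{1..R}. n_r_set Y I q)"
    unfolding D_def sum_distrib_left by (rule sum_mono) simp
  also have "\<dots> = n" unfolding n_r_set_def
    using sum_card_label_classes[of I Y "{1..R}"] assms(1-3) finite_subset[OF assms(1)] by force
  finally have "2 * D \<le> n" .
  have "(real m - 1) / real n \<le> (real m - 1) / (2 * real D)"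
    by (rule divide_left_mono) (use assms(5) \<open>2 * D \<le> n\<close> D_pos in \<open>auto simp: m_def\<close>)
  also have "\<dots> \<le> real (m div 2) / real D"
    using D_pos by (simp add: divide_simps)
  also have "\<dots> = omega_r_set R Y I r"
    using D_pos unfolding omega_r_set_def D_def m_def Let_def by simp
  finally show ?thesis unfolding m_def .
qed

lemma omega_r_set_div_card_ge:
  assumes "I \<subseteq> {0..<N}" "card I = n" "k \<le> N - n" "\<forall>j<N. Y j \<in> {1..R}" "r \<in> {1..R}"
    and t: "t \<in> Omega_r_set N k Y I r"
  shows "1 / (real n * real (n_r_set Y I r) * real (\<Prod>{N - n - k + 1..N - n}))
     \<le> omega_r_set R Y I r / real (card (Omega_r_set N k Y I r))"
proof -
  define m where "m = n_r_set Y I r"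
  define ff where "ff = \<Prod>{N - n - k + 1..N - n}"
  have "length t = k + 2" using t unfolding Omega_r_set_def by blast
  then obtain a b cs where "t = a # b # cs" by (rule length_Suc_Suc_cases)
  then have "2 \<le> m" unfolding m_def
    using t finite_subset[OF assms(1)] by (intro two_le_n_r_set[of I a b]) (auto simp: Omega_r_set_def)
  have "0 < card (Omega_r_set N k Y I r)"
    using t finite_Omega_r_set card_gt_0_iff by blast
  moreover have card_le: "card (Omega_r_set N k Y I r) \<le> m * (m - 1) * ff"
    unfolding m_def ff_def by (rule card_Omega_r_set_le) (use assms \<open>2 \<le> m\<close> in \<open>auto simp: m_def\<close>)
  ultimately have "ff \<noteq> 0" by (intro notI) simp
  have "m \<le> n" unfolding m_def n_r_set_def \<open>card I = n\<close>[symmetric]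
    using finite_subset[OF assms(1)] by (intro card_mono) auto
  with \<open>ff \<noteq> 0\<close> \<open>2 \<le> m\<close> have "0 < ff" "0 < n" by simp_all
  have "1 / (real n * real m * real ff) = ((real m - 1) / real n) / (real m * (real m - 1) * real ff)"
    using \<open>2 \<le> m\<close> \<open>0 < ff\<close> \<open>0 < n\<close> by (simp add: field_simps)
  also have "\<dots> \<le> omega_r_set R Y I r / (real m * (real m - 1) * real ff)"
  proof (rule divide_right_mono)
    show "(real m - 1) / real n \<le> omega_r_set R Y I r"
      unfolding m_def by (rule omega_r_set_ge) (use assms \<open>2 \<le> m\<close> m_def in simp_all)
  qed (use \<open>2 \<le> m\<close> in simp)
  also have "\<dots> \<le> omega_r_set R Y I r / real (card (Omega_r_set N k Y I r))"
  proof (rule divide_left_mono[OF _ omega_r_set_nonneg])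
    show "real (card (Omega_r_set N k Y I r)) \<le> real m * (real m - 1) * real ff"
    proof -
      have "real (card (Omega_r_set N k Y I r)) \<le> real (m * (m - 1) * ff)"
        using card_le by (simp only: of_nat_le_iff)
      also have "\<dots> = real m * (real m - 1) * real ff" using \<open>2 \<le> m\<close> by (simp add: of_nat_diff)
      finally show ?thesis .
    qed
  qed (use \<open>0 < card (Omega_r_set N k Y I r)\<close> \<open>2 \<le> m\<close> \<open>0 < ff\<close> in simp)
  finally show ?thesis unfolding m_def ff_def .
qed

section \<open>Weights of the auxiliary estimator\<close>

definition Ubar_weight :: "nat \<Rightarrow> nat \<Rightarrow> nat \<Rightarrow> nat \<Rightarrow> (nat \<Rightarrow> nat) \<Rightarrow> nat \<Rightarrow> nat list \<Rightarrow> real" where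
  "Ubar_weight N n R k Y r t = avg_over {I. I \<subseteq> {0..<N} \<and> card I = n}
     (\<lambda>I. if t \<in> Omega_r_set N k Y I r
          then omega_r_set R Y I r / real (card (Omega_r_set N k Y I r)) else 0)"

lemma omega_r_set_mult_avg_over:
  "omega_r_set R Y I r * avg_over (Omega_r_set N k Y I r) h
   = (\<Sum>t\<in>Omega_r N k Y r. h t * (if t \<in> Omega_r_set N k Y I r
        then omega_r_set R Y I r / real (card (Omega_r_set N k Y I r)) else 0))"
proof -
  let ?\<Omega> = "Omega_r_set N k Y I r" and ?w = "omega_r_set R Y I r / real (card (Omega_r_set N k Y I r))"
  have "omega_r_set R Y I r * avg_over ?\<Omega> h = (\<Sum>t\<in>?\<Omega>. h t * ?w)"
    by (simp add: avg_over_eq finite_Omega_r_set sum_distrib_left sum_divide_distrib mult_ac)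
  also have "\<dots> = (\<Sum>t\<in>Omega_r N k Y r. if t \<in> ?\<Omega> then h t * ?w else 0)"
  proof -
    have "{t\<in>Omega_r N k Y r. t \<in> ?\<Omega>} = ?\<Omega>" using Omega_r_set_subset by blast
    then show ?thesis unfolding sum.inter_filter[OF finite_Omega_r, symmetric] by simp
  qed
  finally show ?thesis by (simp add: if_distrib cong: if_cong)
qed

lemma U_bar_eq_sum_Ubar_weight:
  assumes "aux_n N k \<le> N"
  shows "U_bar N R k Y X \<phi> f = (\<Sum>r\<in>{1..R}. \<Sum>t\<in>Omega_r N k Y r.
           tuple_loss \<phi> f X t * Ubar_weight N (aux_n N k) R k Y r t)"
proof -
  define n where "n = aux_n N k"
  define G where
    "G I = (\<Sum>r\<in>{1..R}. omega_r_set R Y I r * avg_over (Omega_r_set N k Y I r) (tuple_loss \<phi> f X))"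
    for I
  have "U_bar N R k Y X \<phi> f = avg_over {\<pi>. \<pi> permutes {0..<N}} (\<lambda>\<pi>. G (\<pi> ` {0..<n}))"
    unfolding U_bar_def avg_over_def G_def n_def Let_def omega_r_pi_eq Omega_r_pi_eq I_pi_def
    by (simp add: card_permutations)
  also have "\<dots> = avg_over {I. I \<subseteq> {0..<N} \<and> card I = n} G"
    using avg_over_permutes_image[of "{0..<N}" "{0..<n}" G] assms unfolding n_def by simp
  finally show ?thesis
    unfolding G_def omega_r_set_mult_avg_over Ubar_weight_def n_def
    by (simp add: avg_over_sum avg_over_cmult)
qed

lemma sum_Ubar_weight_le_1:
  "(\<Sum>r\<in>{1..R}. \<Sum>t\<in>Omega_r N k Y r. Ubar_weight N n R k Y r t) \<le> 1"
proof -
  have "(\<Sum>r\<in>{1..R}. omega_r_set R Y I r * avg_over (Omega_r_set N k Y I r) (\<lambda>_. 1)) \<le> 1" for I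
  proof -
    have "omega_r_set R Y I r * avg_over (Omega_r_set N k Y I r) (\<lambda>_. 1) \<le> omega_r_set R Y I r" for r
      by (rule mult_left_le[OF avg_over_le omega_r_set_nonneg]) simp_all
    then show ?thesis using sum_omega_r_set_le_1 by (meson order_trans sum_mono)
  qed
  then show ?thesis
    unfolding Ubar_weight_def avg_over_sum[symmetric]
    by (intro avg_over_le) (simp_all add: omega_r_set_mult_avg_over)
qed

lemma admissible_subsets_eq:
  assumes "a # b # cs \<in> Omega_r N k Y r"
  shows "{I\<in>{I. I \<subseteq> {0..<N} \<and> card I = n}. a # b # cs \<in> Omega_r_set N k Y I r}
       = {I. I \<subseteq> {0..<N} \<and> card I = n \<and> {a, b} \<subseteq> I \<and> I \<inter> set cs = {}}"
  using assms unfolding Omega_r_set_def Omega_r_def by auto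

lemma card_admissible_subsets:
  assumes "a # b # cs \<in> Omega_r N k Y r" "2 \<le> n"
  shows "card {I. I \<subseteq> {0..<N} \<and> card I = n \<and> {a, b} \<subseteq> I \<and> I \<inter> set cs = {}}
       = (N - 2 - k) choose (n - 2)"
proof -
  have "a \<noteq> b" "{a, b} \<subseteq> {0..<N}" "set cs \<subseteq> {0..<N}" "{a, b} \<inter> set cs = {}" "card (set cs) = k"
    using assms(1) distinct_card unfolding Omega_r_def by fastforce+
  then show ?thesis
    using card_subsets_containing_avoiding[of "{0..<N}" "{a, b}" "set cs" n] assms(2)
    by (simp add: numeral_2_eq_2)
qed

lemma sum_n_r_set_subsets_le:
  assumes t: "a # b # cs \<in> Omega_r N k Y r" and "3 \<le> n" "n + k \<le> N"
  shows "(\<Sum>I\<in>{I. I \<subseteq> {0..<N} \<and> card I = n \<and> {a, b} \<subseteq> I \<and> I \<inter> set cs = {}}. real (n_r_set Y I r))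
    \<le> real ((N - 2 - k) choose (n - 2))
        * (2 + (real (N_r N Y r) - 2) * (real n - 2) / (real N - real k - 2))"
proof -
  let ?T = "{I. I \<subseteq> {0..<N} \<and> card I = n \<and> {a, b} \<subseteq> I \<and> I \<inter> set cs = {}}"
  let ?C = "{j\<in>{0..<N}. Y j = r}"
  define K0 where "K0 = (N - 2 - k) choose (n - 2)"
  define K1 where "K1 = (N - 3 - k) choose (n - 3)"
  define x where "x = real (N_r N Y r)"
  have ab: "a \<noteq> b" "a \<in> ?C" "b \<in> ?C" "a \<notin> set cs" "b \<notin> set cs" "set cs \<subseteq> {0..<N}"
    using t unfolding Omega_r_def by auto
  have "card (set cs) = k" using t distinct_card unfolding Omega_r_def by fastforce
  have "2 \<le> card ?C" using two_le_n_r_set[of "{0..<N}" a b Y r] ab unfolding n_r_set_def by simp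
  have "(\<Sum>I\<in>?T. n_r_set Y I r) = (\<Sum>I\<in>?T. card (I \<inter> ?C))"
    unfolding n_r_set_def by (intro sum.cong refl arg_cong[of _ _ card]) blast
  also have "\<dots> \<le> 2 * K0 + (card ?C - 2) * K1"
    using sum_card_Int_subsets_le[of "{0..<N}" ?C "set cs" a b n] ab assms(2)
    unfolding K0_def K1_def \<open>card (set cs) = k\<close> by (simp add: subset_iff)
  finally have "real (\<Sum>I\<in>?T. n_r_set Y I r) \<le> real (2 * K0 + (card ?C - 2) * K1)"
    by (simp only: of_nat_le_iff)
  then have sum_le: "(\<Sum>I\<in>?T. real (n_r_set Y I r)) \<le> 2 * real K0 + (x - 2) * real K1"
    using \<open>2 \<le> card ?C\<close> unfolding x_def N_r_def by (simp add: of_nat_diff)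
  have "Suc (n - 3) * ((N - 2 - k) choose Suc (n - 3)) = (N - 2 - k) * ((N - 2 - k - 1) choose (n - 3))"
    by (rule binomial_absorption)
  moreover have "Suc (n - 3) = n - 2" "N - 2 - k - 1 = N - 3 - k" using assms(2) by auto
  ultimately have "(n - 2) * K0 = (N - 2 - k) * K1" unfolding K0_def K1_def by simp
  then have "real (n - 2) * real K0 = real (N - 2 - k) * real K1" by (metis of_nat_mult)
  moreover have "real (n - 2) = real n - 2" "real (N - 2 - k) = real N - real k - 2"
    using assms(2,3) by (simp_all add: of_nat_diff)
  moreover have "real N - real k - 2 > 0" using assms(2,3) by linarith
  ultimately have "real K1 = real K0 * ((real n - 2) / (real N - real k - 2))"
    by (simp add: field_simps)
  with sum_le show ?thesis unfolding K0_def[symmetric] x_def[symmetric] by (simp add: algebra_simps)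
qed

(* Only the subsets containing the positive pair of t and avoiding its negatives contribute, and
  on these Cauchy-Schwarz gives \<Sum> 1/n_r(I) \<ge> (number of subsets)^2 / \<Sum> n_r(I). *)
lemma sum_tuple_weight_ge:
  assumes "\<forall>j<N. Y j \<in> {1..R}" "r \<in> {1..R}" and t: "t \<in> Omega_r N k Y r"
    and "3 \<le> n" "n + k \<le> N"
  shows "real ((N - 2 - k) choose (n - 2))
      / (real n * real (\<Prod>{N - n - k + 1..N - n})
         * (2 + (real (N_r N Y r) - 2) * (real n - 2) / (real N - real k - 2)))
    \<le> (\<Sum>I\<in>{I. I \<subseteq> {0..<N} \<and> card I = n}. if t \<in> Omega_r_set N k Y I r
          then omega_r_set R Y I r / real (card (Omega_r_set N k Y I r)) else 0)"
proof -
  let ?Sub = "{I. I \<subseteq> {0..<N} \<and> card I = n}"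
  define K0 where "K0 = real ((N - 2 - k) choose (n - 2))"
  define ff where "ff = real (\<Prod>{N - n - k + 1..N - n})"
  define E where "E = 2 + (real (N_r N Y r) - 2) * (real n - 2) / (real N - real k - 2)"
  define m where "m I = real (n_r_set Y I r)" for I
  have "length t = k + 2" using t unfolding Omega_r_def by blast
  then obtain a b cs where t_eq: "t = a # b # cs" "length cs = k" by (rule length_Suc_Suc_cases)
  define T where "T = {I. I \<subseteq> {0..<N} \<and> card I = n \<and> {a, b} \<subseteq> I \<and> I \<inter> set cs = {}}"
  have T_eq: "{I\<in>?Sub. t \<in> Omega_r_set N k Y I r} = T"
    unfolding T_def t_eq by (rule admissible_subsets_eq) (use t t_eq in simp)
  have card_T: "real (card T) = K0"
    unfolding T_def K0_def using card_admissible_subsets[of a b cs N k Y r n] t t_eq assms(4) by simp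
  have ab: "a \<noteq> b" "a < N" "b < N" "Y a = r" "Y b = r"
    using t unfolding t_eq Omega_r_def by auto
  have m_pos: "0 < m I" if "I \<in> T" for I
    using two_le_n_r_set[of I a b Y r] that ab finite_subset[of I "{0..<N}"]
    unfolding T_def m_def by auto
  have "0 < card T" using card_T assms(4,5) unfolding K0_def by simp
  moreover have "(\<Sum>I\<in>T. m I) \<le> K0 * E"
    unfolding m_def T_def K0_def E_def using sum_n_r_set_subsets_le[of a b cs N k Y r n] t assms(4,5)
    by (simp add: t_eq)
  ultimately have "K0 / E \<le> (\<Sum>I\<in>T. 1 / m I)"
    using card_div_le_sum_inverse[of T m E] m_pos unfolding card_T by simp
  then have "(K0 / E) / (real n * ff) \<le> (\<Sum>I\<in>T. 1 / m I) / (real n * ff)"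
    by (rule divide_right_mono) (simp add: ff_def prod_nonneg)
  then have "K0 / (real n * ff * E) \<le> (\<Sum>I\<in>T. 1 / m I) / (real n * ff)"
    by (simp add: ac_simps)
  also have "\<dots> = (\<Sum>I\<in>T. 1 / (real n * m I * ff))"
    by (simp add: sum_divide_distrib mult_ac)
  also have "\<dots> \<le> (\<Sum>I\<in>T. omega_r_set R Y I r / real (card (Omega_r_set N k Y I r)))"
  proof (rule sum_mono)
    fix I assume "I \<in> T"
    then have "I \<in> ?Sub" "t \<in> Omega_r_set N k Y I r" using T_eq by blast+
    then show "1 / (real n * m I * ff) \<le> omega_r_set R Y I r / real (card (Omega_r_set N k Y I r))"
      unfolding m_def ff_def by (intro omega_r_set_div_card_ge) (use assms in auto)
  qed
  also have "\<dots> = (\<Sum>I\<in>?Sub. if t \<in> Omega_r_set N k Y I r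
          then omega_r_set R Y I r / real (card (Omega_r_set N k Y I r)) else 0)"
    unfolding T_eq[symmetric] by (rule sum.inter_filter) (rule finite_subset[of _ "Pow {0..<N}"], auto)
  finally show ?thesis unfolding K0_def ff_def E_def .
qed

lemma Ubar_weight_ge:
  assumes "\<forall>j<N. Y j \<in> {1..R}" "r \<in> {1..R}" and t: "t \<in> Omega_r N k Y r"
    and "3 \<le> n" "n + k \<le> N"
  defines "x \<equiv> real (N_r N Y r)"
  shows "x * (x - 1) * (real n - 1)
           / (real N * (real N - 1) * (2 + (x - 2) * (real n - 2) / (real N - real k - 2)))
           / real (card (Omega_r N k Y r))
         \<le> Ubar_weight N n R k Y r t"
proof -
  define E where "E = 2 + (x - 2) * (real n - 2) / (real N - real k - 2)"
  define ff where "ff = real (\<Prod>{N - 2 - k + 1..N - 2})"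
  define M where "M = real (N choose n)"
  have "length t = k + 2" using t unfolding Omega_r_def by blast
  then obtain a b cs where t_eq: "t = a # b # cs" by (rule length_Suc_Suc_cases)
  have "2 \<le> N_r N Y r"
    using t two_le_n_r_set[of "{0..<N}" a b Y r] unfolding t_eq Omega_r_def N_r_eq_n_r_set by auto
  then have card_\<Omega>: "real (card (Omega_r N k Y r)) = x * (x - 1) * ff"
    using card_Omega_r[of k N Y r] assms(4,5) unfolding x_def ff_def by (simp add: of_nat_diff)
  have "0 < M" "0 < ff" "0 < E" "2 \<le> x" "real N - real k - 2 > 0"
    using assms(4,5) \<open>2 \<le> N_r N Y r\<close> unfolding M_def ff_def E_def x_def
    by (auto intro!: add_pos_nonneg divide_nonneg_nonneg mult_nonneg_nonneg prod_pos)
  have cancel: "c * a / (d * E) / (c * ff) = a / (d * ff) / E" if "c \<noteq> 0" "d \<noteq> 0" for a c d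
    using that \<open>0 < ff\<close> \<open>0 < E\<close> by (simp add: field_simps)
  have "x * (x - 1) * (real n - 1) / (real N * (real N - 1) * E) / real (card (Omega_r N k Y r))
      = (real n - 1) / (real N * (real N - 1) * ff) / E"
    unfolding card_\<Omega> using \<open>2 \<le> x\<close> assms(4,5) by (intro cancel) auto
  also have "\<dots> = real ((N - 2 - k) choose (n - 2)) / (M * real n * real (\<Prod>{N - n - k + 1..N - n})) / E"
    using choose_div_falling_eq[of n k N] assms(4,5) unfolding ff_def M_def by simp
  also have "\<dots> = real ((N - 2 - k) choose (n - 2))
      / (real n * real (\<Prod>{N - n - k + 1..N - n}) * E) / M"
    by (simp add: divide_divide_eq_left mult_ac)
  also have "\<dots> \<le> (\<Sum>I\<in>{I. I \<subseteq> {0..<N} \<and> card I = n}. if t \<in> Omega_r_set N k Y I r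
          then omega_r_set R Y I r / real (card (Omega_r_set N k Y I r)) else 0) / M"
    by (rule divide_right_mono[OF sum_tuple_weight_ge[OF assms(1-5), folded x_def, folded E_def]])
      (use \<open>0 < M\<close> in simp)
  also have "\<dots> = Ubar_weight N n R k Y r t"
    unfolding Ubar_weight_def avg_over_def M_def n_subsets[OF finite_atLeastLessThan] by simp
  finally show ?thesis unfolding E_def .
qed

section \<open>Comparing the two estimators\<close>

(* With x = N_r, the left-hand side is |\<Omega>_r| (u_r - w), where w is the lower bound for W_r(t)
  given by Ubar_weight_ge. *)
lemma pair_weight_gap_le:
  fixes x N n R k :: real
  assumes "2 \<le> x" "n \<le> N" "R < n" "2 \<le> R" "0 \<le> k" "k + 2 < N"
  shows "x / N - x * (x - 1) * (n - 1) / (N * (N - 1) * (2 + (x - 2) * (n - 2) / (N - k - 2)))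
     \<le> 2 / (n - R) + x * (k + 1) / ((N - k - 2) * N)"
proof -
  define m where "m = N - k - 2"
  define Q where "Q = (x - 2) * (n - 2)"
  define T where "T = Q * (k + 1) / m"
  define E where "E = 2 + Q / m"
  define Den where "Den = (N - 1) * E"
  define Num where "Num = (n - 1) * (x - 1)"
  have "0 < m" "0 < N" "0 \<le> Q" using assms unfolding m_def Q_def by simp_all
  then have "0 \<le> T" unfolding T_def using assms(5) by simp
  have Den_eq: "Den = 2 * N - 2 + Q + T"
    unfolding Den_def E_def T_def m_def using \<open>0 < m\<close>[unfolded m_def] by (simp add: field_simps)
  then have "0 < Den" "Q \<le> Den" using \<open>0 \<le> Q\<close> \<open>0 \<le> T\<close> assms by linarith+
  have "x * (n - R) \<le> x * (n - 2)" using assms by (intro mult_left_mono) auto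
  also have "\<dots> = Q + 2 * n - 4" unfolding Q_def by (simp add: algebra_simps)
  also have "\<dots> \<le> Den" using Den_eq \<open>0 \<le> T\<close> assms by linarith
  finally have "x * (n - R) \<le> Den" .
  have "0 < x * (n - R)" using assms by simp
  have "Den - Num \<le> 2 * N + T" unfolding Den_eq Num_def Q_def using assms by (simp add: algebra_simps)
  then have "(Den - Num) / Den \<le> 2 * N / Den + T / Den"
    using \<open>0 < Den\<close> by (simp add: add_divide_distrib[symmetric] divide_right_mono)
  also have "2 * N / Den \<le> 2 * N / (x * (n - R))"
    using \<open>x * (n - R) \<le> Den\<close> \<open>0 < x * (n - R)\<close> \<open>0 < N\<close> by (intro divide_left_mono) auto
  also have "T / Den = (Q / Den) * ((k + 1) / m)" unfolding T_def by simp
  also have "\<dots> \<le> (k + 1) / m"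
    using \<open>Q \<le> Den\<close> \<open>0 < Den\<close> \<open>0 \<le> Q\<close> \<open>0 < m\<close> assms(5)
    by (intro mult_left_le_one_le) (auto simp: divide_le_eq_1)
  finally have "(x / N) * ((Den - Num) / Den) \<le> (x / N) * (2 * N / (x * (n - R)) + (k + 1) / m)"
    using assms(1) \<open>0 < N\<close> by (intro mult_left_mono) auto
  moreover have "(x / N) * ((Den - Num) / Den) = x / N - x * (x - 1) * (n - 1) / (N * (N - 1) * E)"
  proof -
    have "0 \<le> Q / m" using \<open>0 \<le> Q\<close> \<open>0 < m\<close> by simp
    then have "0 < E" "1 < N" unfolding E_def using assms by linarith+
    then show ?thesis unfolding Den_def Num_def by (simp add: field_simps)
  qed
  moreover have "(x / N) * (2 * N / (x * (n - R)) + (k + 1) / m) = 2 / (n - R) + x * (k + 1) / (m * N)"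
    using assms \<open>0 < N\<close> \<open>0 < m\<close> by (simp add: field_simps)
  ultimately show ?thesis unfolding E_def Q_def m_def by simp
qed

lemma U_weight_minus_Ubar_weight_le:
  assumes "\<forall>j<N. Y j \<in> {1..R}" "r \<in> {1..R}" "t \<in> Omega_r N k Y r"
    and "2 \<le> R" "R < n" "n + k \<le> N"
  shows "real (N_r N Y r) / real N / real (card (Omega_r N k Y r)) - Ubar_weight N n R k Y r t
    \<le> (2 / (real n - real R) + real (N_r N Y r) * (real k + 1) / ((real N - real k - 2) * real N))
        / real (card (Omega_r N k Y r))"
proof -
  define x where "x = real (N_r N Y r)"
  define c where "c = real (card (Omega_r N k Y r))"
  have "3 \<le> n" using assms(4,5) by linarith
  have "length t = k + 2" using assms(3) unfolding Omega_r_def by blast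
  then obtain a b cs where "t = a # b # cs" by (rule length_Suc_Suc_cases)
  then have "2 \<le> x"
    using assms(3) two_le_n_r_set[of "{0..<N}" a b Y r] unfolding x_def Omega_r_def N_r_eq_n_r_set by auto
  have "x / real N / c - Ubar_weight N n R k Y r t
      \<le> x / real N / c - x * (x - 1) * (real n - 1)
           / (real N * (real N - 1) * (2 + (x - 2) * (real n - 2) / (real N - real k - 2))) / c"
    using Ubar_weight_ge[OF assms(1-3) \<open>3 \<le> n\<close> assms(6)] unfolding x_def c_def by linarith
  also have "\<dots> = (x / real N - x * (x - 1) * (real n - 1)
           / (real N * (real N - 1) * (2 + (x - 2) * (real n - 2) / (real N - real k - 2)))) / c"
    by (simp add: diff_divide_distrib)
  also have "\<dots> \<le> (2 / (real n - real R) + x * (real k + 1) / ((real N - real k - 2) * real N)) / c"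
    by (rule divide_right_mono[OF pair_weight_gap_le]) (use assms \<open>2 \<le> x\<close> \<open>3 \<le> n\<close> in \<open>auto simp: c_def\<close>)
  finally show ?thesis unfolding x_def c_def .
qed

lemma U_Omega_eq_sum:
  "U_Omega N R k Y X \<phi> f = (\<Sum>r\<in>{1..R}. \<Sum>t\<in>Omega_r N k Y r.
      tuple_loss \<phi> f X t * (real (N_r N Y r) / real N / real (card (Omega_r N k Y r))))"
  unfolding U_Omega_def avg_over_eq[OF finite_Omega_r]
  by (simp add: sum_distrib_left sum_divide_distrib mult_ac)

lemma sum_U_weight_eq_1:
  assumes "\<forall>j<N. Y j \<in> {1..R}" "0 < N" "\<forall>r\<in>{1..R}. Omega_r N k Y r \<noteq> {}"
  shows "(\<Sum>r\<in>{1..R}. \<Sum>t\<in>Omega_r N k Y r. real (N_r N Y r) / real N / real (card (Omega_r N k Y r))) = 1"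
proof -
  have "(\<Sum>r\<in>{1..R}. \<Sum>t\<in>Omega_r N k Y r. real (N_r N Y r) / real N / real (card (Omega_r N k Y r)))
      = (\<Sum>r\<in>{1..R}. real (N_r N Y r) / real N)"
    using assms(3) finite_Omega_r by (intro sum.cong) (auto simp: card_gt_0_iff)
  also have "\<dots> = real (\<Sum>r\<in>{1..R}. N_r N Y r) / real N" by (simp add: sum_divide_distrib)
  also have "(\<Sum>r\<in>{1..R}. N_r N Y r) = N"
    unfolding N_r_def using sum_card_label_classes[of "{0..<N}" Y "{1..R}"] assms(1) by simp
  finally show ?thesis using assms(2) by simp
qed

lemma sum_weight_gap_bounds:
  assumes "\<forall>j<N. Y j \<in> {1..R}" "0 < N"
  shows "(\<Sum>r\<in>{1..R}. 2 / (real n - real R)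
            + real (N_r N Y r) * (real k + 1) / ((real N - real k - 2) * real N))
       = 2 * real R / (real n - real R) + (real k + 1) / (real N - real k - 2)"
proof -
  have "(\<Sum>r\<in>{1..R}. real (N_r N Y r)) = real N"
    unfolding N_r_def of_nat_sum[symmetric] using sum_card_label_classes[of "{0..<N}" Y "{1..R}"] assms(1)
    by simp
  then have "(\<Sum>r\<in>{1..R}. real (N_r N Y r) * (real k + 1) / ((real N - real k - 2) * real N))
      = real N * (real k + 1) / ((real N - real k - 2) * real N)"
    by (simp add: sum_distrib_right[symmetric] sum_divide_distrib[symmetric])
  also have "\<dots> = (real k + 1) / (real N - real k - 2)" using assms(2) by simp
  finally show ?thesis unfolding sum.distrib by simp
qed

lemma abs_U_Omega_minus_U_bar_le:
  assumes "2 \<le> R" "\<forall>j<N. Y j \<in> {1..R}" "R < aux_n N k" "aux_n N k + k \<le> N"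
    and "\<forall>r\<in>{1..R}. 2 \<le> N_r N Y r"
    and "\<forall>r\<in>{1..R}. \<forall>t\<in>Omega_r N k Y r. 0 \<le> tuple_loss \<phi> f X t \<and> tuple_loss \<phi> f X t \<le> B"
  shows "\<bar>U_Omega N R k Y X \<phi> f - U_bar N R k Y X \<phi> f\<bar>
      \<le> B * (2 * real R / (real (aux_n N k) - real R) + (real k + 1) / (real N - real k - 2))"
proof -
  define n where "n = aux_n N k"
  define S where "S = (SIGMA r:{1..R}. Omega_r N k Y r)"
  define c where "c r = real (card (Omega_r N k Y r))" for r
  define u where "u r = real (N_r N Y r) / real N / c r" for r
  define W where "W r t = Ubar_weight N n R k Y r t" for r t
  define \<delta> where
    "\<delta> r = 2 / (real n - real R) + real (N_r N Y r) * (real k + 1) / ((real N - real k - 2) * real N)"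
    for r
  have "3 \<le> n" "n + k \<le> N" "n \<le> N" "0 < N" using assms(1,3,4) unfolding n_def by linarith+
  have c_pos: "0 < c r" if "r \<in> {1..R}" for r
    using card_Omega_r_pos[of k N Y r] assms(5) that \<open>3 \<le> n\<close> \<open>n + k \<le> N\<close> unfolding c_def by simp
  have double_sum: "(\<Sum>r\<in>{1..R}. \<Sum>t\<in>Omega_r N k Y r. g r t) = (\<Sum>s\<in>S. g (fst s) (snd s))" for g
    unfolding S_def by (subst sum.Sigma) (simp_all add: finite_Omega_r split_def)
  have "U_Omega N R k Y X \<phi> f - U_bar N R k Y X \<phi> f
      = (\<Sum>s\<in>S. tuple_loss \<phi> f X (snd s) * (u (fst s) - W (fst s) (snd s)))"
    unfolding U_Omega_eq_sum U_bar_eq_sum_Ubar_weight[OF \<open>n \<le> N\<close>[unfolded n_def]]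
      double_sum u_def c_def W_def n_def
    by (simp add: sum_subtractf[symmetric] right_diff_distrib)
  also have "\<bar>\<dots>\<bar> \<le> B * (\<Sum>s\<in>S. \<delta> (fst s) / c (fst s))"
  proof (rule abs_sum_mult_le)
    have "(\<Sum>s\<in>S. u (fst s)) = (\<Sum>r\<in>{1..R}. \<Sum>t\<in>Omega_r N k Y r. u r)"
      by (rule double_sum[of "\<lambda>r t. u r", symmetric])
    also have "\<dots> = 1"
      unfolding u_def c_def
      by (rule sum_U_weight_eq_1) (use assms(2) \<open>0 < N\<close> c_pos in \<open>force simp: c_def\<close>)+
    finally have "(\<Sum>s\<in>S. u (fst s)) = 1" .
    moreover have "(\<Sum>s\<in>S. W (fst s) (snd s)) \<le> 1"
      unfolding W_def double_sum[of "Ubar_weight N n R k Y", symmetric] by (rule sum_Ubar_weight_le_1)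
    ultimately show "0 \<le> (\<Sum>s\<in>S. u (fst s) - W (fst s) (snd s))"
      by (simp add: sum_subtractf)
  next
    fix s assume "s \<in> S"
    then have s: "fst s \<in> {1..R}" "snd s \<in> Omega_r N k Y (fst s)" unfolding S_def by auto
    then show "0 \<le> tuple_loss \<phi> f X (snd s) \<and> tuple_loss \<phi> f X (snd s) \<le> B" using assms(6) by blast
    show "u (fst s) - W (fst s) (snd s) \<le> \<delta> (fst s) / c (fst s)"
      unfolding u_def W_def \<delta>_def c_def
      by (rule U_weight_minus_Ubar_weight_le)
        (use s assms(1,2) \<open>n + k \<le> N\<close> in \<open>auto simp: n_def assms(3)\<close>)
    show "0 \<le> \<delta> (fst s) / c (fst s)"
      unfolding \<delta>_def using c_pos[OF s(1)] assms(3) \<open>n + k \<le> N\<close> \<open>3 \<le> n\<close>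
      by (auto simp: n_def intro!: divide_nonneg_nonneg add_nonneg_nonneg mult_nonneg_nonneg)
  qed
  also have "(\<Sum>s\<in>S. \<delta> (fst s) / c (fst s)) = (\<Sum>r\<in>{1..R}. \<delta> r)"
    unfolding double_sum[symmetric, of "\<lambda>r t. \<delta> r / c r"] using c_pos
    by (intro sum.cong) (auto simp: c_def)
  also have "\<dots> = 2 * real R / (real n - real R) + (real k + 1) / (real N - real k - 2)"
    unfolding \<delta>_def by (rule sum_weight_gap_bounds) (use assms(2) \<open>0 < N\<close> in auto)
  finally show ?thesis unfolding n_def .
qed

lemma aux_n_bounds:
  assumes "2 \<le> R" "R < aux_n N k"
  shows "aux_n N k + k \<le> N" "2 * k + 4 \<le> N"
proof -
  define q where "q = N div (k + 2)"
  have n_eq: "aux_n N k = 2 * q" unfolding aux_n_def q_def by simp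
  have "q * k + 2 * q \<le> N"
    using div_times_less_eq_dividend[of N "k + 2"] unfolding q_def by (simp add: algebra_simps)
  moreover have "2 \<le> q" using assms n_eq by linarith
  moreover from this have "2 * k \<le> q * k" by simp
  ultimately show "aux_n N k + k \<le> N" "2 * k + 4 \<le> N" unfolding n_eq by linarith+
qed

lemma final_bound_le:
  fixes B R k N n :: real
  assumes "0 \<le> B" "2 \<le> R" "1 \<le> k" "2 * k + 4 \<le> N"
  shows "B * (2 * R / (n - R) + (k + 1) / (N - k - 2))
      \<le> 2 * B * R / (n - R) + 6 * B * R * k / N + 2 * B * k / (N - k - 1)"
proof -
  have "(k + 1) / (N - k - 2) \<le> (k + 1) / (N / 2)"
    using assms by (intro divide_left_mono) auto
  also have "\<dots> = 2 * (k + 1) / N" by simp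
  also have "\<dots> \<le> 6 * R * k / N"
  proof (rule divide_right_mono)
    have "6 * 2 * k \<le> 6 * R * k" using assms by (intro mult_right_mono) auto
    then show "2 * (k + 1) \<le> 6 * R * k" using assms by argo
  qed (use assms in simp)
  finally have "B * ((k + 1) / (N - k - 2)) \<le> B * (6 * R * k / N)"
    using assms(1) by (rule mult_left_mono)
  moreover have "0 \<le> 2 * B * k / (N - k - 1)" using assms by simp
  moreover have "B * (2 * R / (n - R) + (k + 1) / (N - k - 2))
      = 2 * B * R / (n - R) + B * ((k + 1) / (N - k - 2))" by (simp add: distrib_left)
  moreover have "B * (6 * R * k / N) = 6 * B * R * k / N" by simp
  ultimately show ?thesis by linarith
qed

theorem mainTheorem8:
  fixes N R k :: nat and Y :: "nat \<Rightarrow> nat" and X :: "nat \<Rightarrow> 'x"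
    and \<phi> :: "real list \<Rightarrow> real" and F :: "('x \<Rightarrow> 'v::euclidean_space) set" and B :: real
  assumes "R \<ge> 2" and "k \<ge> 1"
    and "\<forall>j<N. Y j \<in> {1..R}"
    and "\<forall>v. \<phi> v \<ge> 0"
    and "\<forall>f\<in>F. \<forall>x xp xneg. length xneg = k \<longrightarrow>
            0 \<le> loss \<phi> f x xp xneg \<and> loss \<phi> f x xp xneg \<le> B"
    and "aux_n N k > R"
    and "\<forall>r\<in>{1..R}. N_r N Y r \<ge> 2 * (k + 1)"
  shows "\<forall>f\<in>F. \<bar>U_Omega N R k Y X \<phi> f - U_bar N R k Y X \<phi> f\<bar>
           \<le> 2 * B * R / (real (aux_n N k) - R) + 6 * B * R * k / N
              + 2 * B * k / (real N - k - 1)"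
proof
  fix f assume "f \<in> F"
  then have loss_bounded: "0 \<le> loss \<phi> f x xp xneg \<and> loss \<phi> f x xp xneg \<le> B"
    if "length xneg = k" for x xp xneg
    using assms(5) that by blast
  have "0 \<le> B" using loss_bounded[of "replicate k undefined"] by force
  have "\<forall>r\<in>{1..R}. \<forall>t\<in>Omega_r N k Y r. 0 \<le> tuple_loss \<phi> f X t \<and> tuple_loss \<phi> f X t \<le> B"
    unfolding tuple_loss_def Omega_r_def using loss_bounded by simp
  moreover have "\<forall>r\<in>{1..R}. 2 \<le> N_r N Y r" using assms(7) by fastforce
  ultimately have "\<bar>U_Omega N R k Y X \<phi> f - U_bar N R k Y X \<phi> f\<bar>
      \<le> B * (2 * real R / (real (aux_n N k) - real R) + (real k + 1) / (real N - real k - 2))"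
    using abs_U_Omega_minus_U_bar_le aux_n_bounds assms(1,3,6) by blast
  also have "\<dots> \<le> 2 * B * R / (real (aux_n N k) - R) + 6 * B * R * k / N + 2 * B * k / (real N - k - 1)"
    using aux_n_bounds[OF assms(1,6)] assms(1,2) \<open>0 \<le> B\<close> by (intro final_bound_le) auto
  finally show "\<bar>U_Omega N R k Y X \<phi> f - U_bar N R k Y X \<phi> f\<bar>
      \<le> 2 * B * R / (real (aux_n N k) - R) + 6 * B * R * k / N + 2 * B * k / (real N - k - 1)" .
qed

end
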